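(* Let $\mathcal{G}$ be a simple temporal graph with $n>2$ vertices. Then, in the strict setting, $\mathcal{G}$ does not admit a temporal spanning tree.
   Context: A temporal graph is $\mathcal{G}=(V,E,\lambda)$ with $V$ a finite vertex set, $E$ a set of undirected edges, and $\lambda:E\to 2^{\mathbb{N}}$ assigning time labels to edges; $(V,E)$ is the footprint. It is simple if every edge has exactly one time label. In the strict setting, a temporal path is a sequence of pairs $(e_i,t_i)$ with $t_i\in\lambda(e_i)$, $\langle e_i\rangle$ a path in the footprint and $\langle t_i\rangle$ strictly increasing. A temporal subgraph keeps a subgraph of the footprint with labels restricted from $\lambda$. A temporal spanning tree of $\mathcal{G}$ is a temporal subgraph spanning all vertices whose footprint is a tree and in which there is a temporal path from every vertex to every other vertex. *)

theory Defs
  imports Main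
begin

definition temporal_graph :: "'v set \<Rightarrow> 'v set set \<Rightarrow> ('v set \<Rightarrow> nat set) \<Rightarrow> bool" where
  "temporal_graph V E lam \<longleftrightarrow> finite V \<and>
     (\<forall>e\<in>E. \<exists>u v. u \<noteq> v \<and> u \<in> V \<and> v \<in> V \<and> e = {u, v})"

definition simple_tg :: "'v set set \<Rightarrow> ('v set \<Rightarrow> nat set) \<Rightarrow> bool" where
  "simple_tg E lam \<longleftrightarrow> (\<forall>e\<in>E. card (lam e) = 1)"

definition is_path :: "'v set set \<Rightarrow> 'v list \<Rightarrow> bool" where
  "is_path E vs \<longleftrightarrow> vs \<noteq> [] \<and> distinct vs \<and>
     (\<forall>i. Suc i < length vs \<longrightarrow> {vs ! i, vs ! Suc i} \<in> E)"

definition strict_temporal_path ::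
  "'v set set \<Rightarrow> ('v set \<Rightarrow> nat set) \<Rightarrow> 'v \<Rightarrow> 'v \<Rightarrow> 'v list \<Rightarrow> nat list \<Rightarrow> bool" where
  "strict_temporal_path E lam u w vs ts \<longleftrightarrow>
     is_path E vs \<and> hd vs = u \<and> last vs = w \<and>
     length ts + 1 = length vs \<and>
     (\<forall>i < length ts. ts ! i \<in> lam {vs ! i, vs ! Suc i}) \<and>
     sorted_wrt (<) ts"

definition temporally_connected :: "'v set \<Rightarrow> 'v set set \<Rightarrow> ('v set \<Rightarrow> nat set) \<Rightarrow> bool" where
  "temporally_connected V E lam \<longleftrightarrow>
     (\<forall>u\<in>V. \<forall>w\<in>V. u \<noteq> w \<longrightarrow> (\<exists>vs ts. strict_temporal_path E lam u w vs ts))"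

definition connected_graph :: "'v set \<Rightarrow> 'v set set \<Rightarrow> bool" where
  "connected_graph V E \<longleftrightarrow>
     (\<forall>u\<in>V. \<forall>w\<in>V. \<exists>vs. is_path E vs \<and> hd vs = u \<and> last vs = w)"

definition has_cycle :: "'v set set \<Rightarrow> bool" where
  "has_cycle E \<longleftrightarrow> (\<exists>vs. is_path E vs \<and> length vs \<ge> 3 \<and> {last vs, hd vs} \<in> E)"

definition is_tree :: "'v set \<Rightarrow> 'v set set \<Rightarrow> bool" where
  "is_tree V E \<longleftrightarrow> connected_graph V E \<and> \<not> has_cycle E"

definition temporal_spanning_tree ::
  "'v set \<Rightarrow> 'v set set \<Rightarrow> ('v set \<Rightarrow> nat set) \<Rightarrow> 'v set set \<Rightarrow> bool" where
  "temporal_spanning_tree V E lam E' \<longleftrightarrow>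
     E' \<subseteq> E \<and> is_tree V E' \<and> temporally_connected V E' lam"

end

theory Submission
  imports Defs
begin

text \<open>A tree on more than two vertices has a vertex \<open>b\<close> with two distinct neighbours
\<open>a\<close> and \<open>c\<close>. Since the tree has no cycles, the only path between \<open>a\<close> and \<open>c\<close> is
\<open>a, b, c\<close>, so a strict temporal path from \<open>a\<close> to \<open>c\<close> needs a label of \<open>{a,b}\<close> below
a label of \<open>{b,c}\<close>, and one from \<open>c\<close> to \<open>a\<close> needs the reverse. With a single label
per edge both cannot hold.\<close>

lemma is_path_Cons:
  assumes "is_path E vs" "b \<notin> set vs" "{b, hd vs} \<in> E"
  shows "is_path E (b # vs)"
  using assms unfolding is_path_def
  by (auto simp: nth_Cons hd_conv_nth split: nat.splits)

lemma is_path_take: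
  assumes "is_path E vs" "0 < n"
  shows "is_path E (take n vs)"
  using assms unfolding is_path_def by auto

lemma is_path_drop:
  assumes "is_path E vs" "n < length vs"
  shows "is_path E (drop n vs)"
  using assms unfolding is_path_def by (auto simp: distinct_drop)

lemma is_path_edge_or_two_steps:
  assumes "is_path E vs" "hd vs \<noteq> last vs"
  shows "{hd vs, last vs} \<in> E \<or> (\<exists>a b c. {a, b} \<in> E \<and> {b, c} \<in> E \<and> distinct [a, b, c])"
proof -
  consider x where "vs = [x]" | x y where "vs = [x, y]" | x y z zs where "vs = x # y # z # zs"
    using assms by (metis is_path_def list.exhaust)
  then show ?thesis
  proof cases
    case 1
    then show ?thesis using assms(2) by simp
  next
    case 2
    then show ?thesis using assms(1) unfolding is_path_def by force
  next
    case (3 x y z zs)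
    then have "{x, y} \<in> E" "{y, z} \<in> E" "distinct [x, y, z]"
      using assms(1) unfolding is_path_def by (force+)
    then show ?thesis by blast
  qed
qed

lemma connected_graph_two_steps:
  assumes "connected_graph V E" "2 < card V"
  shows "\<exists>a b c. {a, b} \<in> E \<and> {b, c} \<in> E \<and> distinct [a, b, c]"
proof (rule ccontr)
  assume no_two_steps: "\<not> ?thesis"
  have adjacent: "{u, w} \<in> E" if uw: "u \<in> V" "w \<in> V" "u \<noteq> w" for u w
  proof -
    obtain vs where vs: "is_path E vs" "hd vs = u" "last vs = w"
      using assms(1) uw(1,2) unfolding connected_graph_def by blast
    then have "{hd vs, last vs} \<in> E"
      using is_path_edge_or_two_steps no_two_steps uw(3) by blast
    then show ?thesis using vs(2,3) by simp
  qed
  have "Suc (Suc (Suc 0)) \<le> card V" using assms(2) by simp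
  then obtain x y z where "x \<in> V" "y \<in> V" "z \<in> V" "distinct [x, y, z]"
    unfolding card_le_Suc_iff by fastforce
  then have "{y, x} \<in> E" "{x, z} \<in> E" "distinct [y, x, z]"
    using adjacent by auto
  then show False using no_two_steps by blast
qed

text \<open>In an acyclic graph a path from \<open>a\<close> to \<open>c\<close> must pass through \<open>b\<close> (otherwise
prepending \<open>b\<close> closes a cycle), must reach it in one step (otherwise its initial segment
up to \<open>b\<close> closes a cycle with \<open>{b,a}\<close>), and must then stop at \<open>c\<close> (otherwise the rest
of the path closes a cycle with \<open>{c,b}\<close>).\<close>

lemma acyclic_path_through_common_neighbour:
  assumes acyclic: "\<not> has_cycle E"
    and ab: "{a, b} \<in> E" and bc: "{b, c} \<in> E" and abc: "distinct [a, b, c]"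
    and vs: "is_path E vs" "hd vs = a" "last vs = c"
  shows "vs = [a, b, c]"
proof -
  have closes_no_cycle: "\<not> (3 \<le> length ws \<and> {last ws, hd ws} \<in> E)"
    if "is_path E ws" for ws
    using acyclic that unfolding has_cycle_def by blast
  have "vs \<noteq> []" using vs(1) unfolding is_path_def by simp
  then have length_vs: "2 \<le> length vs"
    using vs(2,3) abc by (cases vs) (auto simp: Suc_le_eq split: if_splits)
  have "b \<in> set vs"
  proof (rule ccontr)
    assume "b \<notin> set vs"
    then have "is_path E (b # vs)"
      using is_path_Cons[OF vs(1)] vs(2) ab by (simp add: insert_commute)
    then show False
      using closes_no_cycle[of "b # vs"] length_vs \<open>vs \<noteq> []\<close> vs(3) bc
      by (simp add: insert_commute)
  qed
  then obtain k where k: "k < length vs" "vs ! k = b" by (auto simp: in_set_conv_nth)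
  have vs_0: "vs ! 0 = a" using vs(2) \<open>vs \<noteq> []\<close> by (simp add: hd_conv_nth)
  have "k = 1"
  proof (rule ccontr)
    assume "k \<noteq> 1"
    moreover have "k \<noteq> 0" using k vs_0 abc by (metis distinct_length_2_or_more)
    ultimately have "3 \<le> length (take (Suc k) vs)" using k by simp
    moreover have "last (take (Suc k) vs) = b"
      using k by (simp add: take_Suc_conv_app_nth)
    moreover have "hd (take (Suc k) vs) = a"
      using vs(2) \<open>vs \<noteq> []\<close> by (cases vs) auto
    ultimately show False
      using closes_no_cycle[OF is_path_take[OF vs(1), of "Suc k"]] ab
      by (simp add: insert_commute)
  qed
  have "length vs = 3"
  proof (rule ccontr)
    assume "length vs \<noteq> 3"
    moreover have "length vs \<noteq> 2"
      using k \<open>k = 1\<close> vs(3) abc \<open>vs \<noteq> []\<close> by (auto simp: last_conv_nth)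
    ultimately have "3 \<le> length (drop 1 vs)" using length_vs by simp
    moreover have "last (drop 1 vs) = c" "hd (drop 1 vs) = b"
      using vs(3) k \<open>k = 1\<close> length_vs by (simp_all add: hd_drop_conv_nth)
    ultimately show False
      using closes_no_cycle[OF is_path_drop[OF vs(1), of 1]] length_vs bc
      by (simp add: insert_commute)
  qed
  then obtain x y z where "vs = [x, y, z]" by (auto simp: length_Suc_conv numeral_3_eq_3)
  then show ?thesis using vs(2,3) k \<open>k = 1\<close> by simp
qed

lemma acyclic_strict_temporal_path_labels:
  assumes "\<not> has_cycle E" "{a, b} \<in> E" "{b, c} \<in> E" "distinct [a, b, c]"
    and "strict_temporal_path E lam a c vs ts"
  shows "\<exists>s t. s \<in> lam {a, b} \<and> t \<in> lam {b, c} \<and> s < t"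
proof -
  have path: "is_path E vs" "hd vs = a" "last vs = c"
    and labels: "length ts + 1 = length vs" "\<forall>i < length ts. ts ! i \<in> lam {vs ! i, vs ! Suc i}"
    and increasing: "sorted_wrt (<) ts"
    using assms(5) unfolding strict_temporal_path_def by blast+
  have "vs = [a, b, c]"
    by (rule acyclic_path_through_common_neighbour[OF assms(1-4) path])
  then have "length ts = 2" "ts ! 0 \<in> lam {a, b}" "ts ! 1 \<in> lam {b, c}"
    using labels by auto
  moreover have "ts ! 0 < ts ! 1"
    using increasing \<open>length ts = 2\<close> by (simp add: sorted_wrt_iff_nth_less)
  ultimately show ?thesis by blast
qed

lemma simple_tg_label_unique:
  assumes "simple_tg E lam" "e \<in> E" "s \<in> lam e" "t \<in> lam e"
  shows "s = t"
proof -
  obtain x where "lam e = {x}"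
    using assms(1,2) unfolding simple_tg_def by (auto simp: card_1_singleton_iff)
  then show ?thesis using assms(3,4) by simp
qed

lemma temporal_graph_edge_subset:
  assumes "temporal_graph V E lam" "e \<in> E"
  shows "e \<subseteq> V"
proof -
  obtain u v where "u \<in> V" "v \<in> V" "e = {u, v}"
    using assms unfolding temporal_graph_def by blast
  then show ?thesis by simp
qed

theorem lemma1:
  fixes V :: "'v set" and E :: "'v set set" and lam :: "'v set \<Rightarrow> nat set"
  assumes "temporal_graph V E lam"
    and "simple_tg E lam"
    and "card V > 2"
  shows "\<not> (\<exists>E'. temporal_spanning_tree V E lam E')"
proof
  assume "\<exists>E'. temporal_spanning_tree V E lam E'"
  then obtain E' where sub: "E' \<subseteq> E" and conn: "connected_graph V E'"
    and acyclic: "\<not> has_cycle E'" and tc: "temporally_connected V E' lam"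
    unfolding temporal_spanning_tree_def is_tree_def by blast
  obtain a b c where ab: "{a, b} \<in> E'" and bc: "{b, c} \<in> E'" and abc: "distinct [a, b, c]"
    using connected_graph_two_steps[OF conn assms(3)] by blast
  have "a \<in> V" "c \<in> V"
    using temporal_graph_edge_subset[OF assms(1)] sub ab bc by blast+
  moreover have "a \<noteq> c" using abc by simp
  ultimately obtain vs ts ws us where "strict_temporal_path E' lam a c vs ts"
    and "strict_temporal_path E' lam c a ws us"
    using tc unfolding temporally_connected_def by metis
  moreover have "{c, b} \<in> E'" "{b, a} \<in> E'" "distinct [c, b, a]"
    using ab bc abc by (auto simp: insert_commute)
  ultimately obtain s t s' t' where "s \<in> lam {a, b}" "t \<in> lam {b, c}" "s < t"
    and "s' \<in> lam {c, b}" "t' \<in> lam {b, a}" "s' < t'"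
    using acyclic_strict_temporal_path_labels[OF acyclic] ab bc abc by meson
  moreover have "s = t'" "t = s'"
    using simple_tg_label_unique[OF assms(2)] sub ab bc calculation
    by (auto simp: insert_commute)
  ultimately show False by simp
qed

end
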